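(* For every finite set $\Gamma$, the assignment $X\mapsto TX$ (tape maps) is closed under the unit and Kleisli extension of the store monad with store $S=\mathbb Z\times\Gamma^{\mathbb Z}$: for every set $X$ and $x\in X$, $\eta(x)\in TX$; and for every $p\in TX$ and every map $f:X\to TY$, $f^\dagger(p)\in TY$. Hence the tape monad is a well-defined submonad of the store monad.
   Context: Store monad over $S$: $X\mapsto(X\times S)^S$ with $\eta(x)(s)=(x,s)$ and, for $p=\langle r,z,t\rangle$ (writing $s=(i,\sigma)$) and $f:X\to(Y\times S)^S$, $f^\dagger(p)(i,\sigma)=f(r(i,\sigma))(z(i,\sigma),t(i,\sigma))$. Notation: $\sigma=_{i\pm k}\sigma'$ iff $\sigma(j)=\sigma'(j)$ whenever $|i-j|\le k$; $\sigma=^{i\pm k}\sigma'$ iff $\sigma(j)=\sigma'(j)$ whenever $|i-j|>k$; $\sigma_{+j}=\sigma\circ(\lambda i.i+j)$. $TX$ is the set of $\langle r,z,t\rangle:\mathbb Z\times\Gamma^{\mathbb Z}\to X\times\mathbb Z\times\Gamma^{\mathbb Z}$ for which there is $k\ge0$ such that for all $i,j\in\mathbb Z$ and all $\sigma,\sigma'$ with $\sigma=_{i\pm k}\sigma'$: $t(i,\sigma)=_{i\pm k}t(i,\sigma')$, $r(i,\sigma)=r(i,\sigma')$, $|z(i,\sigma)-i|\le k$, $t(i,\sigma)=^{i\pm k}\sigma$, $z(i,\sigma)=z(i,\sigma')$, $t(i,\sigma_{+j})=t(i+j,\sigma)_{+j}$, $r(i,\sigma_{+j})=r(i+j,\sigma)$,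 $z(i,\sigma_{+j})=z(i+j,\sigma)-j$. *)

theory Defs
  imports Main
begin

definition st_eta :: "'x \<Rightarrow> ('s \<Rightarrow> 'x \<times> 's)" where
  "st_eta x = (\<lambda>s. (x, s))"

definition st_ext :: "('x \<Rightarrow> ('s \<Rightarrow> 'y \<times> 's)) \<Rightarrow> ('s \<Rightarrow> 'x \<times> 's) \<Rightarrow> ('s \<Rightarrow> 'y \<times> 's)" where
  "st_ext f p = (\<lambda>s. f (fst (p s)) (snd (p s)))"

type_synonym 'g store = "int \<times> (int \<Rightarrow> 'g)"

definition eq_near :: "int \<Rightarrow> nat \<Rightarrow> (int \<Rightarrow> 'g) \<Rightarrow> (int \<Rightarrow> 'g) \<Rightarrow> bool" where
  "eq_near i k \<sigma> \<sigma>' \<longleftrightarrow> (\<forall>j. \<bar>i - j\<bar> \<le> int k \<longrightarrow> \<sigma> j = \<sigma>' j)"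

definition eq_far :: "int \<Rightarrow> nat \<Rightarrow> (int \<Rightarrow> 'g) \<Rightarrow> (int \<Rightarrow> 'g) \<Rightarrow> bool" where
  "eq_far i k \<sigma> \<sigma>' \<longleftrightarrow> (\<forall>j. \<bar>i - j\<bar> > int k \<longrightarrow> \<sigma> j = \<sigma>' j)"

definition shift :: "(int \<Rightarrow> 'g) \<Rightarrow> int \<Rightarrow> (int \<Rightarrow> 'g)" where
  "shift \<sigma> j = \<sigma> \<circ> (\<lambda>i. i + j)"

definition tape_maps :: "('g store \<Rightarrow> 'x \<times> 'g store) set" where
  "tape_maps = {p. \<exists>k::nat. \<forall>i j \<sigma> \<sigma>'.
     let r = (\<lambda>i \<sigma>. fst (p (i, \<sigma>)));
         z = (\<lambda>i \<sigma>. fst (snd (p (i, \<sigma>))));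
         t = (\<lambda>i \<sigma>. snd (snd (p (i, \<sigma>))))
     in (eq_near i k \<sigma> \<sigma>' \<longrightarrow>
           eq_near i k (t i \<sigma>) (t i \<sigma>') \<and>
           r i \<sigma> = r i \<sigma>' \<and>
           z i \<sigma> = z i \<sigma>') \<and>
        \<bar>z i \<sigma> - i\<bar> \<le> int k \<and>
        eq_far i k (t i \<sigma>) \<sigma> \<and>
        t i (shift \<sigma> j) = shift (t (i + j) \<sigma>) j \<and>
        r i (shift \<sigma> j) = r (i + j) \<sigma> \<and>
        z i (shift \<sigma> j) = z (i + j) \<sigma> - j}"

end

theory Submission
  imports Defs "HOL-Library.FuncSet"
begin

text \<open>For \<open>f\<^sup>\<dagger>(p)\<close>, if \<open>p\<close> has radius \<open>k\<close> and every
  continuation \<open>f x\<close> that \<open>p\<close> can reach has radius \<open>K\<close>, then \<open>f\<^sup>\<dagger>(p)\<close> has radius \<open>k + K\<close>: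
  the second head position lies within \<open>k\<close> of the first, so its \<open>K\<close>-window lies inside the
  \<open>(k + K)\<close>-window of the start. A uniform \<open>K\<close> exists because, by shift invariance and
  locality, the output of \<open>p\<close> depends only on the \<open>2k + 1\<close> cells around the head, and there
  are finitely many such patterns over a finite alphabet.\<close>

definition tm_out :: "('g store \<Rightarrow> 'x \<times> 'g store) \<Rightarrow> int \<Rightarrow> (int \<Rightarrow> 'g) \<Rightarrow> 'x" where
  "tm_out p i \<sigma> = fst (p (i, \<sigma>))"

definition tm_head :: "('g store \<Rightarrow> 'x \<times> 'g store) \<Rightarrow> int \<Rightarrow> (int \<Rightarrow> 'g) \<Rightarrow> int" where
  "tm_head p i \<sigma> = fst (snd (p (i, \<sigma>)))"

definition tm_tape :: "('g store \<Rightarrow> 'x \<times> 'g store) \<Rightarrow> int \<Rightarrow> (int \<Rightarrow> 'g) \<Rightarrow> (int \<Rightarrow> 'g)" where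
  "tm_tape p i \<sigma> = snd (snd (p (i, \<sigma>)))"

definition local_within :: "('g store \<Rightarrow> 'x \<times> 'g store) \<Rightarrow> nat \<Rightarrow> bool" where
  "local_within p k \<longleftrightarrow> (\<forall>i \<sigma> \<sigma>'. eq_near i k \<sigma> \<sigma>' \<longrightarrow>
     tm_out p i \<sigma> = tm_out p i \<sigma>' \<and> tm_head p i \<sigma> = tm_head p i \<sigma>' \<and>
     eq_near i k (tm_tape p i \<sigma>) (tm_tape p i \<sigma>'))"

definition moves_within :: "('g store \<Rightarrow> 'x \<times> 'g store) \<Rightarrow> nat \<Rightarrow> bool" where
  "moves_within p k \<longleftrightarrow> (\<forall>i \<sigma>. \<bar>tm_head p i \<sigma> - i\<bar> \<le> int k)"

definition writes_within :: "('g store \<Rightarrow> 'x \<times> 'g store) \<Rightarrow> nat \<Rightarrow> bool" where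
  "writes_within p k \<longleftrightarrow> (\<forall>i \<sigma>. eq_far i k (tm_tape p i \<sigma>) \<sigma>)"

definition shift_invariant :: "('g store \<Rightarrow> 'x \<times> 'g store) \<Rightarrow> bool" where
  "shift_invariant p \<longleftrightarrow> (\<forall>i j \<sigma>.
     tm_out p i (shift \<sigma> j) = tm_out p (i + j) \<sigma> \<and>
     tm_head p i (shift \<sigma> j) = tm_head p (i + j) \<sigma> - j \<and>
     tm_tape p i (shift \<sigma> j) = shift (tm_tape p (i + j) \<sigma>) j)"

definition tape_map_within :: "('g store \<Rightarrow> 'x \<times> 'g store) \<Rightarrow> nat \<Rightarrow> bool" where
  "tape_map_within p k \<longleftrightarrow>
     local_within p k \<and> moves_within p k \<and> writes_within p k \<and> shift_invariant p"

lemma tape_maps_iff: "p \<in> tape_maps \<longleftrightarrow> (\<exists>k. tape_map_within p k)"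
proof -
  have "(\<forall>i j \<sigma> \<sigma>'. (eq_near i k \<sigma> \<sigma>' \<longrightarrow>
           eq_near i k (tm_tape p i \<sigma>) (tm_tape p i \<sigma>') \<and>
           tm_out p i \<sigma> = tm_out p i \<sigma>' \<and> tm_head p i \<sigma> = tm_head p i \<sigma>') \<and>
        \<bar>tm_head p i \<sigma> - i\<bar> \<le> int k \<and> eq_far i k (tm_tape p i \<sigma>) \<sigma> \<and>
        tm_tape p i (shift \<sigma> j) = shift (tm_tape p (i + j) \<sigma>) j \<and>
        tm_out p i (shift \<sigma> j) = tm_out p (i + j) \<sigma> \<and>
        tm_head p i (shift \<sigma> j) = tm_head p (i + j) \<sigma> - j) \<longleftrightarrow> tape_map_within p k" for k
    unfolding tape_map_within_def local_within_def moves_within_def writes_within_def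
      shift_invariant_def
    by (intro iffI conjI allI impI; blast)
  then show ?thesis
    unfolding tape_maps_def tm_out_def tm_head_def tm_tape_def Let_def by simp
qed

lemma st_ext_simps:
  "tm_out (st_ext f p) i \<sigma> = tm_out (f (tm_out p i \<sigma>)) (tm_head p i \<sigma>) (tm_tape p i \<sigma>)"
  "tm_head (st_ext f p) i \<sigma> = tm_head (f (tm_out p i \<sigma>)) (tm_head p i \<sigma>) (tm_tape p i \<sigma>)"
  "tm_tape (st_ext f p) i \<sigma> = tm_tape (f (tm_out p i \<sigma>)) (tm_head p i \<sigma>) (tm_tape p i \<sigma>)"
  unfolding st_ext_def tm_out_def tm_head_def tm_tape_def by simp_all

lemma eq_near_subwindow:
  assumes "eq_near i k \<sigma> \<sigma>'" and "\<bar>z - i\<bar> + int K \<le> int k"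
  shows "eq_near z K \<sigma> \<sigma>'"
  unfolding eq_near_def
proof (intro allI impI)
  fix j assume "\<bar>z - j\<bar> \<le> int K"
  with assms(2) have "\<bar>i - j\<bar> \<le> int k" by arith
  with assms(1) show "\<sigma> j = \<sigma>' j" unfolding eq_near_def by blast
qed

lemma eq_near_of_eq_far:
  assumes "eq_near i k \<sigma> \<sigma>'" and "eq_near z K \<tau> \<tau>'"
    and "eq_far z K \<tau> \<sigma>" and "eq_far z K \<tau>' \<sigma>'"
  shows "eq_near i k \<tau> \<tau>'"
  using assms unfolding eq_near_def eq_far_def by (metis not_le)

lemma eq_far_trans:
  assumes "eq_far z K \<tau> \<rho>" and "eq_far i k \<rho> \<sigma>"
    and "\<bar>z - i\<bar> + int K \<le> int k'" and "k \<le> k'"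
  shows "eq_far i k' \<tau> \<sigma>"
  unfolding eq_far_def
proof (intro allI impI)
  fix j assume far: "int k' < \<bar>i - j\<bar>"
  with assms(3) have "int K < \<bar>z - j\<bar>" by arith
  with assms(1) have "\<tau> j = \<rho> j" unfolding eq_far_def by blast
  also from far assms(4) have "int k < \<bar>i - j\<bar>" by linarith
  with assms(2) have "\<rho> j = \<sigma> j" unfolding eq_far_def by blast
  finally show "\<tau> j = \<sigma> j" .
qed

lemma finite_range_if_determined_on:
  fixes F :: "('a \<Rightarrow> 'g::finite) \<Rightarrow> 'b"
  assumes "finite A" and "\<And>\<sigma> \<sigma>'. (\<forall>j\<in>A. \<sigma> j = \<sigma>' j) \<Longrightarrow> F \<sigma> = F \<sigma>'"
  shows "finite (range F)"
proof -
  have "range F \<subseteq> F ` (PiE A (\<lambda>_. UNIV))"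
  proof
    fix y assume "y \<in> range F"
    then obtain \<sigma> where "y = F \<sigma>" by blast
    also have "\<dots> = F (restrict \<sigma> A)" by (rule assms(2)) simp
    finally show "y \<in> F ` (PiE A (\<lambda>_. UNIV))" by simp
  qed
  moreover have "finite (PiE A (\<lambda>_. UNIV :: 'g set))"
    using assms(1) by (simp add: finite_PiE)
  ultimately show ?thesis by (meson finite_imageI finite_subset)
qed

lemma local_within_mono:
  fixes p :: "'g store \<Rightarrow> 'x \<times> 'g store"
  assumes "local_within p k" and "writes_within p k" and "k \<le> k'"
  shows "local_within p k'"
  unfolding local_within_def
proof (intro allI impI)
  fix i and \<sigma> \<sigma>' :: "int \<Rightarrow> 'g" assume near: "eq_near i k' \<sigma> \<sigma>'"
  then have "eq_near i k \<sigma> \<sigma>'" using \<open>k \<le> k'\<close> by (simp add: eq_near_subwindow)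
  with assms(1) have same: "tm_out p i \<sigma> = tm_out p i \<sigma>'" "tm_head p i \<sigma> = tm_head p i \<sigma>'"
    and tapes: "eq_near i k (tm_tape p i \<sigma>) (tm_tape p i \<sigma>')"
    unfolding local_within_def by blast+
  have "eq_near i k' (tm_tape p i \<sigma>) (tm_tape p i \<sigma>')"
    using eq_near_of_eq_far[OF near tapes] assms(2) unfolding writes_within_def by blast
  with same show "tm_out p i \<sigma> = tm_out p i \<sigma>' \<and> tm_head p i \<sigma> = tm_head p i \<sigma>' \<and>
      eq_near i k' (tm_tape p i \<sigma>) (tm_tape p i \<sigma>')" by blast
qed

lemma tape_map_within_mono:
  assumes "tape_map_within p k" and "k \<le> k'"
  shows "tape_map_within p k'"
proof -
  from assms(1) have p: "local_within p k" "moves_within p k" "writes_within p k" "shift_invariant p"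
    unfolding tape_map_within_def by blast+
  have "int k \<le> int k'" using assms(2) by simp
  then have "moves_within p k'" "writes_within p k'"
    using p(2,3) unfolding moves_within_def writes_within_def eq_far_def
    by (meson order_trans, meson le_less_trans)
  then show ?thesis
    using p local_within_mono[OF p(1,3) assms(2)] unfolding tape_map_within_def by blast
qed

lemma finite_range_tm_out:
  fixes p :: "'g::finite store \<Rightarrow> 'x \<times> 'g store"
  assumes "local_within p k" and "shift_invariant p"
  shows "finite (range (case_prod (tm_out p)))"
proof -
  have "finite (range (tm_out p 0))"
  proof (rule finite_range_if_determined_on)
    show "finite {-int k..int k}" by simp
    show "tm_out p 0 \<sigma> = tm_out p 0 \<sigma>'" if "\<forall>j\<in>{-int k..int k}. \<sigma> j = \<sigma>' j" for \<sigma> \<sigma>'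
    proof -
      have "eq_near 0 k \<sigma> \<sigma>'"
        using that unfolding eq_near_def by (auto simp: abs_le_iff)
      then show ?thesis
        using assms(1) unfolding local_within_def by blast
    qed
  qed
  moreover have "range (case_prod (tm_out p)) \<subseteq> range (tm_out p 0)"
  proof clarify
    fix i \<sigma>
    have "tm_out p i \<sigma> = tm_out p 0 (shift \<sigma> i)"
      using assms(2) unfolding shift_invariant_def by simp
    then show "tm_out p i \<sigma> \<in> range (tm_out p 0)" by simp
  qed
  ultimately show ?thesis by (rule finite_subset[rotated])
qed

lemma tape_map_within_st_eta: "tape_map_within (st_eta x) 0"
  unfolding tape_map_within_def local_within_def moves_within_def writes_within_def
    shift_invariant_def tm_out_def tm_head_def tm_tape_def st_eta_def eq_far_def shift_def
  by simp

context
  fixes p :: "'g store \<Rightarrow> 'x \<times> 'g store" and f :: "'x \<Rightarrow> 'g store \<Rightarrow> 'y \<times> 'g store"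
    and k K :: nat
  assumes p: "tape_map_within p k"
    and f: "\<And>i \<sigma>. tape_map_within (f (tm_out p i \<sigma>)) K"
begin

lemma moves_within_st_ext: "moves_within (st_ext f p) (k + K)"
  unfolding moves_within_def st_ext_simps
proof (intro allI)
  fix i \<sigma>
  have "\<bar>tm_head p i \<sigma> - i\<bar> \<le> int k"
    using p unfolding tape_map_within_def moves_within_def by blast
  moreover have "\<bar>tm_head (f (tm_out p i \<sigma>)) (tm_head p i \<sigma>) (tm_tape p i \<sigma>) - tm_head p i \<sigma>\<bar> \<le> int K"
    using f unfolding tape_map_within_def moves_within_def by blast
  ultimately show "\<bar>tm_head (f (tm_out p i \<sigma>)) (tm_head p i \<sigma>) (tm_tape p i \<sigma>) - i\<bar> \<le> int (k + K)"
    by linarith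
qed

lemma writes_within_st_ext: "writes_within (st_ext f p) (k + K)"
  unfolding writes_within_def st_ext_simps
proof (intro allI)
  fix i \<sigma>
  show "eq_far i (k + K) (tm_tape (f (tm_out p i \<sigma>)) (tm_head p i \<sigma>) (tm_tape p i \<sigma>)) \<sigma>"
  proof (rule eq_far_trans)
    show "eq_far (tm_head p i \<sigma>) K
        (tm_tape (f (tm_out p i \<sigma>)) (tm_head p i \<sigma>) (tm_tape p i \<sigma>)) (tm_tape p i \<sigma>)"
      using f unfolding tape_map_within_def writes_within_def by blast
    show "eq_far i k (tm_tape p i \<sigma>) \<sigma>"
      using p unfolding tape_map_within_def writes_within_def by blast
    show "\<bar>tm_head p i \<sigma> - i\<bar> + int K \<le> int (k + K)"
      using p unfolding tape_map_within_def moves_within_def by fastforce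
  qed simp
qed

lemma local_within_st_ext: "local_within (st_ext f p) (k + K)"
  unfolding local_within_def st_ext_simps
proof (intro allI impI)
  fix i and \<sigma> \<sigma>' :: "int \<Rightarrow> 'g" assume near: "eq_near i (k + K) \<sigma> \<sigma>'"
  have "local_within p (k + K)"
    using p local_within_mono unfolding tape_map_within_def by fastforce
  with near have x: "tm_out p i \<sigma>' = tm_out p i \<sigma>" and z: "tm_head p i \<sigma>' = tm_head p i \<sigma>"
    and tapes: "eq_near i (k + K) (tm_tape p i \<sigma>) (tm_tape p i \<sigma>')"
    unfolding local_within_def by simp_all
  define q where "q = f (tm_out p i \<sigma>)"
  define z\<^sub>0 where "z\<^sub>0 = tm_head p i \<sigma>"
  define \<tau> \<tau>' where "\<tau> = tm_tape p i \<sigma>" and "\<tau>' = tm_tape p i \<sigma>'"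
  have "\<bar>z\<^sub>0 - i\<bar> + int K \<le> int (k + K)"
    using p unfolding z\<^sub>0_def tape_map_within_def moves_within_def by fastforce
  with tapes have "eq_near z\<^sub>0 K \<tau> \<tau>'"
    unfolding \<tau>_def \<tau>'_def by (rule eq_near_subwindow)
  moreover have q: "local_within q K" "writes_within q K"
    using f unfolding q_def tape_map_within_def by blast+
  ultimately have same: "tm_out q z\<^sub>0 \<tau> = tm_out q z\<^sub>0 \<tau>'" "tm_head q z\<^sub>0 \<tau> = tm_head q z\<^sub>0 \<tau>'"
    and out_tapes: "eq_near z\<^sub>0 K (tm_tape q z\<^sub>0 \<tau>) (tm_tape q z\<^sub>0 \<tau>')"
    unfolding local_within_def by simp_all
  have "eq_far z\<^sub>0 K (tm_tape q z\<^sub>0 \<tau>) \<tau>" "eq_far z\<^sub>0 K (tm_tape q z\<^sub>0 \<tau>') \<tau>'"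
    using q(2) unfolding writes_within_def by simp_all
  with tapes out_tapes have "eq_near i (k + K) (tm_tape q z\<^sub>0 \<tau>) (tm_tape q z\<^sub>0 \<tau>')"
    unfolding \<tau>_def \<tau>'_def by (rule eq_near_of_eq_far)
  with same show
    "tm_out (f (tm_out p i \<sigma>)) (tm_head p i \<sigma>) (tm_tape p i \<sigma>) =
       tm_out (f (tm_out p i \<sigma>')) (tm_head p i \<sigma>') (tm_tape p i \<sigma>') \<and>
     tm_head (f (tm_out p i \<sigma>)) (tm_head p i \<sigma>) (tm_tape p i \<sigma>) =
       tm_head (f (tm_out p i \<sigma>')) (tm_head p i \<sigma>') (tm_tape p i \<sigma>') \<and>
     eq_near i (k + K) (tm_tape (f (tm_out p i \<sigma>)) (tm_head p i \<sigma>) (tm_tape p i \<sigma>))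
       (tm_tape (f (tm_out p i \<sigma>')) (tm_head p i \<sigma>') (tm_tape p i \<sigma>'))"
    unfolding x z q_def z\<^sub>0_def \<tau>_def \<tau>'_def by simp
qed

lemma shift_invariant_st_ext: "shift_invariant (st_ext f p)"
  unfolding shift_invariant_def st_ext_simps
proof (intro allI)
  fix i j \<sigma>
  have sp: "tm_out p i (shift \<sigma> j) = tm_out p (i + j) \<sigma>"
    "tm_head p i (shift \<sigma> j) = tm_head p (i + j) \<sigma> - j"
    "tm_tape p i (shift \<sigma> j) = shift (tm_tape p (i + j) \<sigma>) j"
    using p unfolding tape_map_within_def shift_invariant_def by blast+
  have "shift_invariant (f (tm_out p (i + j) \<sigma>))"
    using f unfolding tape_map_within_def by blast
  then show "tm_out (f (tm_out p i (shift \<sigma> j))) (tm_head p i (shift \<sigma> j)) (tm_tape p i (shift \<sigma> j)) =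
        tm_out (f (tm_out p (i + j) \<sigma>)) (tm_head p (i + j) \<sigma>) (tm_tape p (i + j) \<sigma>) \<and>
      tm_head (f (tm_out p i (shift \<sigma> j))) (tm_head p i (shift \<sigma> j)) (tm_tape p i (shift \<sigma> j)) =
        tm_head (f (tm_out p (i + j) \<sigma>)) (tm_head p (i + j) \<sigma>) (tm_tape p (i + j) \<sigma>) - j \<and>
      tm_tape (f (tm_out p i (shift \<sigma> j))) (tm_head p i (shift \<sigma> j)) (tm_tape p i (shift \<sigma> j)) =
        shift (tm_tape (f (tm_out p (i + j) \<sigma>)) (tm_head p (i + j) \<sigma>) (tm_tape p (i + j) \<sigma>)) j"
    unfolding sp shift_invariant_def by simp
qed

lemma tape_map_within_st_ext: "tape_map_within (st_ext f p) (k + K)"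
  unfolding tape_map_within_def
  using local_within_st_ext moves_within_st_ext writes_within_st_ext shift_invariant_st_ext
  by blast

end

theorem mainTheorem15:
  fixes g_type :: "'g::finite itself"
  shows "(\<forall>x::'x. (st_eta x :: 'g store \<Rightarrow> 'x \<times> 'g store) \<in> tape_maps) \<and>
         (\<forall>(p :: 'g store \<Rightarrow> 'x \<times> 'g store) (f :: 'x \<Rightarrow> 'g store \<Rightarrow> 'y \<times> 'g store).
            p \<in> tape_maps \<longrightarrow> (\<forall>x. f x \<in> tape_maps) \<longrightarrow> st_ext f p \<in> tape_maps)"
proof (intro conjI allI impI)
  show "(st_eta x :: 'g store \<Rightarrow> 'x \<times> 'g store) \<in> tape_maps" for x :: 'x
    unfolding tape_maps_iff by (rule exI, rule tape_map_within_st_eta)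
next
  fix p :: "'g store \<Rightarrow> 'x \<times> 'g store" and f :: "'x \<Rightarrow> 'g store \<Rightarrow> 'y \<times> 'g store"
  assume "p \<in> tape_maps" and "\<forall>x. f x \<in> tape_maps"
  then obtain k where p: "tape_map_within p k" and "\<forall>x. \<exists>k. tape_map_within (f x) k"
    unfolding tape_maps_iff by blast
  then obtain kf where f: "\<And>x. tape_map_within (f x) (kf x)"
    by metis
  define R where "R = range (case_prod (tm_out p))"
  have "finite R"
    using p finite_range_tm_out unfolding R_def tape_map_within_def by blast
  moreover have "tm_out p i \<sigma> \<in> R" for i \<sigma>
    unfolding R_def by (rule range_eqI[of _ _ "(i, \<sigma>)"]) simp
  ultimately have "kf (tm_out p i \<sigma>) \<le> Max (kf ` R)" for i \<sigma>
    by (intro Max_ge finite_imageI imageI)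
  then have "tape_map_within (f (tm_out p i \<sigma>)) (Max (kf ` R))" for i \<sigma>
    using f tape_map_within_mono by blast
  then have "tape_map_within (st_ext f p) (k + Max (kf ` R))"
    by (rule tape_map_within_st_ext[OF p])
  then show "st_ext f p \<in> tape_maps"
    unfolding tape_maps_iff by (rule exI)
qed

end
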